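(* As formal power series in $q$ with coefficients in $\mathbb{Z}[x]$, $$\sum_{\lambda\in \mathcal{SC}}x^{n_1(\lambda)}q^{|\lambda|} =1+x \sum_{n\geq 1}\frac{q^{n^2}\, \big(1-(1-x)q^{2n}\big)\, \big((1-x^2)q^2;q^2\big)_{n-1}}{(q^2;q^2)_{n}}.$$
   Context: A partition is self-conjugate if its Young diagram is symmetric about the main diagonal; $\mathcal{SC}$ is the set of all self-conjugate partitions (including the empty partition of size $0$), and $|\lambda|$ is the size. The hook length of the cell $(i,j)$ is the number of cells to its right in row $i$ plus the number below it in column $j$ plus $1$; $n_1(\lambda)$ is the number of cells of $\lambda$ with hook length $1$. $(a;q)_0=1$, $(a;q)_n=\prod_{j=0}^{n-1}(1-aq^j)$. *)

theory Defs
  imports "HOL-Computational_Algebra.Formal_Power_Series" "HOL-Computational_Algebra.Polynomial"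
begin

definition is_partition :: "nat list \<Rightarrow> bool" where
  "is_partition la \<longleftrightarrow> sorted_wrt (\<ge>) la \<and> (\<forall>p\<in>set la. 0 < p)"

definition conj_part :: "nat list \<Rightarrow> nat list" where
  "conj_part la = map (\<lambda>j. length (filter (\<lambda>p. j < p) la)) [0..<(if la = [] then 0 else hd la)]"

definition self_conjugate :: "nat list \<Rightarrow> bool" where
  "self_conjugate la \<longleftrightarrow> is_partition la \<and> conj_part la = la"

definition SC :: "nat list set" where
  "SC = {la. self_conjugate la}"

definition psize :: "nat list \<Rightarrow> nat" where
  "psize la = sum_list la"

definition cells :: "nat list \<Rightarrow> (nat \<times> nat) set" where
  "cells la = {(i, j). i < length la \<and> j < la ! i}"

text \<open>Hook length: arm (cells to the right) + leg (cells below) + 1.\<close>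
definition hook :: "nat list \<Rightarrow> nat \<times> nat \<Rightarrow> nat" where
  "hook la c = (case c of (i, j) \<Rightarrow> (la ! i - Suc j) + (conj_part la ! j - Suc i) + 1)"

definition n1 :: "nat list \<Rightarrow> nat" where
  "n1 la = card {c \<in> cells la. hook la c = 1}"

definition qpoch :: "'a::comm_ring_1 \<Rightarrow> 'a \<Rightarrow> nat \<Rightarrow> 'a" where
  "qpoch a b n = (\<Prod>j<n. 1 - a * b ^ j)"

abbreviation px :: "int poly" where
  "px \<equiv> [:0, 1:]"

text \<open>Division by a power series with constant term 1 (a unit): multiply by its inverse.\<close>
definition fps_div1 :: "'a::comm_ring_1 fps \<Rightarrow> 'a fps \<Rightarrow> 'a fps" where
  "fps_div1 N D = N * fps_left_inverse D 1"

definition SC_gf :: "int poly fps" where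
  "SC_gf = Abs_fps (\<lambda>m. \<Sum>la\<in>{la\<in>SC. psize la = m}. monom 1 (n1 la))"

definition rhs_term :: "nat \<Rightarrow> int poly fps" where
  "rhs_term n = fps_div1
     (fps_X ^ (n\<^sup>2) * (1 - fps_const (1 - px) * fps_X ^ (2 * n))
        * qpoch (fps_const (1 - px\<^sup>2) * fps_X\<^sup>2) (fps_X\<^sup>2) (n - 1))
     (qpoch (fps_X\<^sup>2) (fps_X\<^sup>2) n)"

end

theory Submission
  imports Defs
begin

text \<open>A self-conjugate partition is an \<open>n \<times> n\<close> Durfee square with a partition \<open>\<mu>\<close> of at most
  \<open>n\<close> parts attached to its right and the conjugate of \<open>\<mu>\<close> attached below, so its size is
  \<open>n\<^sup>2 + 2|\<mu>|\<close>. The cells of hook length 1 are the corners of the diagram, one for each distinct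
  part size, and the joined partition has twice as many distinct parts as \<open>\<mu>\<close>, plus one for the
  corner of the square when \<open>\<mu>\<close> has fewer than \<open>n\<close> parts.
  Let \<open>C\<^sub>n\<close> be the generating function of \<open>x\<^bsup>2d(\<mu>)\<^esup>q\<^bsup>2|\<mu>|\<^esup>\<close> over partitions with at most
  \<open>n\<close> parts, \<open>d(\<mu>)\<close> counting distinct parts. Removing the first column of those with exactly
  \<open>n\<close> parts gives \<open>(1 - q\<^bsup>2n\<^esup>) C\<^sub>n = (1 - (1 - x\<^sup>2) q\<^bsup>2n\<^esup>) C\<^sub>n\<^sub>-\<^sub>1\<close>, hence
  \<open>C\<^sub>n = ((1 - x\<^sup>2)q\<^sup>2;q\<^sup>2)\<^sub>n / (q\<^sup>2;q\<^sup>2)\<^sub>n\<close>, and the partitions with Durfee square of size \<open>n\<close>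
  contribute \<open>q\<^bsup>n\<^sup>2\<^esup>(C\<^sub>n + (x - 1) C\<^sub>n\<^sub>-\<^sub>1)\<close>, which is \<open>x\<close> times the \<open>n\<close>-th summand.\<close>

section \<open>Partitions and conjugation\<close>

definition parts_gt :: "nat list \<Rightarrow> nat \<Rightarrow> nat" where
  "parts_gt la j = length (filter (\<lambda>p. j < p) la)"

definition part :: "nat list \<Rightarrow> nat \<Rightarrow> nat" where
  "part la i = (if i < length la then la ! i else 0)"

lemma conj_part_altdef: "conj_part la = map (parts_gt la) [0..<part la 0]"
  by (cases la) (auto simp: conj_part_def parts_gt_def part_def)

lemma parts_gt_Cons: "parts_gt (a # xs) j = (if j < a then Suc (parts_gt xs j) else parts_gt xs j)"
  by (simp add: parts_gt_def)

lemma part_Cons_0 [simp]: "part (a # xs) 0 = a"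
  and part_Cons_Suc [simp]: "part (a # xs) (Suc i) = part xs i"
  and part_Nil [simp]: "part [] i = 0"
  by (simp_all add: part_def)

lemma is_partition_Cons:
  "is_partition (a # xs) \<longleftrightarrow> 0 < a \<and> (\<forall>p\<in>set xs. p \<le> a) \<and> is_partition xs"
  by (auto simp: is_partition_def)

lemma less_parts_gt_iff: "is_partition la \<Longrightarrow> i < parts_gt la j \<longleftrightarrow> j < part la i"
proof (induction la arbitrary: i)
  case Nil
  then show ?case by (simp add: parts_gt_def)
next
  case (Cons a xs)
  then have le_a: "\<forall>p\<in>set xs. p \<le> a" and xs: "is_partition xs"
    by (auto simp: is_partition_Cons)
  show ?case
  proof (cases "j < a")
    case True
    then show ?thesis using Cons.IH[OF xs] by (cases i) (auto simp: parts_gt_Cons)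
  next
    case False
    with le_a have "parts_gt xs j = 0" "\<not> j < part xs k" for k
      by (auto simp: parts_gt_def filter_empty_conv part_def dest!: nth_mem)
    with False show ?thesis by (cases i) (auto simp: parts_gt_Cons)
  qed
qed

lemma part_antimono: "is_partition la \<Longrightarrow> i \<le> i' \<Longrightarrow> part la i' \<le> part la i"
  unfolding is_partition_def part_def by (auto simp: sorted_wrt_iff_nth_less le_less)

lemma nth_antimono: "is_partition la \<Longrightarrow> i \<le> k \<Longrightarrow> k < length la \<Longrightarrow> la ! k \<le> la ! i"
  using part_antimono[of la i k] by (simp add: part_def)

lemma part_pos_iff: "is_partition la \<Longrightarrow> 0 < part la i \<longleftrightarrow> i < length la"
  by (auto simp: is_partition_def part_def)

lemma parts_gt_le_length: "parts_gt la j \<le> length la"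
  by (simp add: parts_gt_def)

lemma parts_gt_0: "is_partition la \<Longrightarrow> parts_gt la 0 = length la"
  by (simp add: parts_gt_def is_partition_def filter_id_conv)

lemma parts_gt_antimono: "j \<le> j' \<Longrightarrow> parts_gt la j' \<le> parts_gt la j"
  by (induction la) (auto simp: parts_gt_Cons parts_gt_def)

lemma parts_gt_conj_part:
  assumes "is_partition la" shows "parts_gt (conj_part la) j = part la j"
proof -
  have "parts_gt (conj_part la) j = card {k. k < part la 0 \<and> j < map (parts_gt la) [0..<part la 0] ! k}"
    by (simp add: conj_part_altdef parts_gt_def[of "map _ _"] length_filter_conv_card)
  also have "\<dots> = card {k. k < part la 0 \<and> j < parts_gt la k}"
    by (auto intro: arg_cong[where f = card])
  also have "{k. k < part la 0 \<and> j < parts_gt la k} = {..<part la j}"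
    using part_antimono[OF assms, of 0 j] by (auto simp: less_parts_gt_iff[OF assms])
  finally show ?thesis by simp
qed

lemma part_conj_part: "is_partition la \<Longrightarrow> part (conj_part la) k = parts_gt la k"
  using less_parts_gt_iff[of la 0 k] by (auto simp: conj_part_altdef part_def)

lemma is_partition_conj_part:
  assumes "is_partition la" shows "is_partition (conj_part la)"
proof -
  have "k < part la 0 \<Longrightarrow> 0 < parts_gt la k" for k
    using less_parts_gt_iff[OF assms, of 0 k] by simp
  then show ?thesis unfolding conj_part_altdef is_partition_def
    by (auto simp: sorted_wrt_iff_nth_less parts_gt_antimono)
qed

lemma partition_eqI:
  assumes a: "is_partition a" and b: "is_partition b" and eq: "\<And>i. part a i = part b i"
  shows "a = b"
proof -
  have "i < length a \<longleftrightarrow> i < length b" for i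
    using part_pos_iff[OF a, of i] part_pos_iff[OF b, of i] eq[of i] by simp
  then have len: "length a = length b" by (metis nat_neq_iff)
  show ?thesis
    by (rule nth_equalityI[OF len]) (use eq len in \<open>metis part_def\<close>)
qed

lemma conj_part_eq_iff:
  "is_partition la \<Longrightarrow> conj_part la = la \<longleftrightarrow> (\<forall>j. parts_gt la j = part la j)"
  by (metis partition_eqI is_partition_conj_part part_conj_part)

lemma SC_iff: "la \<in> SC \<longleftrightarrow> is_partition la \<and> (\<forall>j. parts_gt la j = part la j)"
  using conj_part_eq_iff by (auto simp: SC_def self_conjugate_def)

section \<open>Corners\<close>

definition corner_rows :: "nat list \<Rightarrow> nat set" where
  "corner_rows la = {i. i < length la \<and> part la (Suc i) < la ! i}"

lemma inj_on_nth_corner_rows: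
  assumes "is_partition la" shows "inj_on ((!) la) (corner_rows la)"
proof (rule linorder_inj_onI')
  fix i i' assume "i \<in> corner_rows la" "i' \<in> corner_rows la" "i < i'"
  then have "la ! i' \<le> part la (Suc i)" "part la (Suc i) < la ! i"
    using part_antimono[OF assms, of "Suc i" i'] by (auto simp: corner_rows_def part_def)
  then show "la ! i \<noteq> la ! i'" by simp
qed

lemma nth_image_corner_rows:
  assumes P: "is_partition la" shows "(!) la ` corner_rows la = set la"
proof
  show "(!) la ` corner_rows la \<subseteq> set la" by (auto simp: corner_rows_def)
  show "set la \<subseteq> (!) la ` corner_rows la"
  proof
    fix v assume "v \<in> set la"
    then obtain k where k: "k < length la" "la ! k = v" by (auto simp: in_set_conv_nth)
    have "0 < v" using P k by (auto simp: is_partition_def)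
    txt \<open>The last row whose part exceeds \<open>v - 1\<close> is a corner row of length \<open>v\<close>.\<close>
    define i where "i = parts_gt la (v - 1) - 1"
    have "k < parts_gt la (v - 1)" using less_parts_gt_iff[OF P] k \<open>0 < v\<close> by (simp add: part_def)
    then have ki: "k \<le> i" and i_less: "i < parts_gt la (v - 1)" by (auto simp: i_def)
    then have "v - 1 < part la i" using less_parts_gt_iff[OF P] by simp
    then have il: "i < length la" and "v - 1 < la ! i" by (auto simp: part_def split: if_splits)
    moreover have "la ! i \<le> v" using nth_antimono[OF P ki il] k by simp
    ultimately have i_v: "la ! i = v" by linarith
    have "\<not> Suc i < parts_gt la (v - 1)" using i_less by (simp add: i_def)
    then have "part la (Suc i) \<le> v - 1" using less_parts_gt_iff[OF P, of "Suc i" "v - 1"] by simp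
    then have "i \<in> corner_rows la" using il i_v \<open>0 < v\<close> by (simp add: corner_rows_def)
    then show "v \<in> (!) la ` corner_rows la" using i_v by blast
  qed
qed

lemma card_corner_rows: "is_partition la \<Longrightarrow> card (corner_rows la) = card (set la)"
  using card_image[OF inj_on_nth_corner_rows] nth_image_corner_rows by metis

lemma hook_one_cells:
  assumes P: "is_partition la"
  shows "{c \<in> cells la. hook la c = 1} = (\<lambda>i. (i, la ! i - 1)) ` corner_rows la"
proof -
  have hook_iff: "hook la (i, j) = 1 \<longleftrightarrow> j = la ! i - 1 \<and> i \<in> corner_rows la"
    if ij: "i < length la" "j < la ! i" for i j
  proof -
    have "la ! i \<le> part la 0" using nth_antimono[OF P, of 0 i] ij by (auto simp: part_def)
    then have "conj_part la ! j = parts_gt la j" using ij by (simp add: conj_part_altdef)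
    then have "hook la (i, j) = 1 \<longleftrightarrow> j = la ! i - 1 \<and> parts_gt la j = Suc i"
      using ij less_parts_gt_iff[OF P, of i j] by (auto simp: hook_def part_def)
    also have "\<dots> \<longleftrightarrow> j = la ! i - 1 \<and> i \<in> corner_rows la"
      using ij less_parts_gt_iff[OF P, of i j] less_parts_gt_iff[OF P, of "Suc i" j]
      by (auto simp: corner_rows_def part_def)
    finally show ?thesis .
  qed
  have "la ! i - 1 < la ! i" if "i < length la" for i
    using P that by (auto simp: is_partition_def)
  then show ?thesis
    using hook_iff by (auto simp: cells_def corner_rows_def)
qed

lemma n1_eq_card_set: "is_partition la \<Longrightarrow> n1 la = card (set la)"
proof -
  assume P: "is_partition la"
  have "inj_on (\<lambda>i. (i, la ! i - 1)) (corner_rows la)" by (rule inj_onI) auto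
  then show ?thesis
    unfolding n1_def hook_one_cells[OF P] by (simp add: card_image card_corner_rows[OF P])
qed

lemma length_conj_part: "length (conj_part mu) = part mu 0"
  by (simp add: conj_part_altdef)

lemma parts_gt_Suc_less_iff: "parts_gt xs (Suc j) < parts_gt xs j \<longleftrightarrow> Suc j \<in> set xs"
proof (induction xs)
  case (Cons a xs)
  then show ?case using parts_gt_antimono[of j "Suc j" xs] by (auto simp: parts_gt_Cons)
qed (simp add: parts_gt_def)

lemma card_set_conj_part:
  assumes P: "is_partition mu" shows "card (set (conj_part mu)) = card (set mu)"
proof -
  have "j < part mu 0" if "Suc j \<in> set mu" for j
    using that nth_antimono[OF P, of 0] by (auto simp: in_set_conv_nth part_def) (metis Suc_le_lessD)
  moreover have "j < part mu 0 \<Longrightarrow> conj_part mu ! j = parts_gt mu j" for j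
    by (simp add: conj_part_altdef)
  ultimately have "corner_rows (conj_part mu) = {j. Suc j \<in> set mu}"
    by (auto simp: corner_rows_def length_conj_part part_conj_part[OF P]
        parts_gt_Suc_less_iff[symmetric])
  moreover have "set mu = Suc ` {j. Suc j \<in> set mu}"
    using P by (auto simp: is_partition_def image_iff) (metis gr0_conv_Suc)
  ultimately show ?thesis
    using card_corner_rows[OF is_partition_conj_part[OF P]] by (metis card_image inj_Suc)
qed

section \<open>Durfee decomposition\<close>

definition durfee_join :: "nat \<Rightarrow> nat list \<Rightarrow> nat list" where
  "durfee_join n mu = map (\<lambda>i. n + part mu i) [0..<n] @ conj_part mu"

lemma part_durfee_join:
  "is_partition mu \<Longrightarrow> part (durfee_join n mu) i = (if i < n then n + part mu i else parts_gt mu (i - n))"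
  by (auto simp: durfee_join_def part_def nth_append part_conj_part[symmetric])

lemma is_partition_durfee_join:
  assumes P: "is_partition mu" and L: "length mu \<le> n"
  shows "is_partition (durfee_join n mu)"
proof -
  have C: "is_partition (conj_part mu)" by (rule is_partition_conj_part[OF P])
  have "sorted_wrt (\<ge>) (map (\<lambda>i. n + part mu i) [0..<n])"
    by (auto simp: sorted_wrt_iff_nth_less part_antimono[OF P])
  moreover have "b \<le> n" if "b \<in> set (conj_part mu)" for b
    using that parts_gt_le_length[of mu] L by (auto simp: conj_part_altdef intro: order_trans)
  ultimately show ?thesis
    using C unfolding is_partition_def durfee_join_def
    by (auto simp: sorted_wrt_append intro: trans_le_add1)
qed

lemma parts_gt_durfee_join:
  assumes P: "is_partition mu" and L: "length mu \<le> n"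
  shows "parts_gt (durfee_join n mu) j = part (durfee_join n mu) j"
proof -
  let ?square_arm = "map (\<lambda>i. n + part mu i) [0..<n]"
  have "parts_gt ?square_arm j = card {i. i < n \<and> j < n + part mu i}"
    by (simp add: parts_gt_def length_filter_conv_card) (rule arg_cong[where f = card], auto)
  also have "{i. i < n \<and> j < n + part mu i} = (if j < n then {..<n} else {..<parts_gt mu (j - n)})"
    using parts_gt_le_length[of mu "j - n"] L
    by (auto simp: less_parts_gt_iff[OF P] part_def split: if_splits)
  finally have square_arm: "parts_gt ?square_arm j = (if j < n then n else parts_gt mu (j - n))"
    by simp
  have "parts_gt (durfee_join n mu) j = parts_gt ?square_arm j + part mu j"
    by (simp add: durfee_join_def parts_gt_def parts_gt_conj_part[OF P, symmetric])
  also have "\<dots> = part (durfee_join n mu) j"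
    unfolding square_arm part_durfee_join[OF P] using L by (auto simp: part_def)
  finally show ?thesis .
qed

lemma durfee_join_in_SC: "is_partition mu \<Longrightarrow> length mu \<le> n \<Longrightarrow> durfee_join n mu \<in> SC"
  using is_partition_durfee_join parts_gt_durfee_join by (simp add: SC_iff)

lemma sum_parts_gt: "\<forall>p\<in>set la. p \<le> N \<Longrightarrow> (\<Sum>j<N. parts_gt la j) = sum_list la"
proof (induction la)
  case (Cons a xs)
  have "(\<Sum>j<N. parts_gt (a # xs) j) = (\<Sum>j<N. (if j < a then 1 else 0) + parts_gt xs j)"
    by (rule sum.cong) (auto simp: parts_gt_Cons)
  also have "\<dots> = card {j. j < N \<and> j < a} + (\<Sum>j<N. parts_gt xs j)"
    by (simp add: sum.distrib sum.If_cases Int_def)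
  also have "{j. j < N \<and> j < a} = {..<a}" using Cons.prems by auto
  finally show ?case using Cons by simp
qed (simp add: parts_gt_def)

lemma sum_list_conj_part:
  assumes "is_partition mu" shows "sum_list (conj_part mu) = sum_list mu"
proof -
  have "\<forall>p\<in>set mu. p \<le> part mu 0"
    using nth_antimono[OF assms, of 0] by (auto simp: in_set_conv_nth part_def)
  then show ?thesis
    by (simp add: conj_part_altdef interv_sum_list_conv_sum_set_nat atLeast0LessThan sum_parts_gt)
qed

lemma sum_part: "length mu \<le> n \<Longrightarrow> (\<Sum>i<n. part mu i) = sum_list mu"
proof -
  assume "length mu \<le> n"
  then have "(\<Sum>i<n. part mu i) = (\<Sum>i<length mu. part mu i)"
    by (intro sum.mono_neutral_right) (auto simp: part_def)
  also have "\<dots> = (\<Sum>i<length mu. mu ! i)" by (rule sum.cong) (auto simp: part_def)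
  finally show ?thesis by (simp add: sum_list_sum_nth atLeast0LessThan)
qed

lemma psize_durfee_join:
  "is_partition mu \<Longrightarrow> length mu \<le> n \<Longrightarrow> psize (durfee_join n mu) = n\<^sup>2 + 2 * psize mu"
  by (simp add: psize_def durfee_join_def sum_list_conj_part interv_sum_list_conv_sum_set_nat
      atLeast0LessThan sum.distrib sum_part power2_eq_square)

lemma card_set_durfee_join:
  assumes P: "is_partition mu" and L: "length mu \<le> n"
  shows "card (set (durfee_join n mu)) = 2 * card (set mu) + (if length mu < n then 1 else 0)"
proof -
  let ?A = "set (map (\<lambda>i. n + part mu i) [0..<n])"
  let ?B = "set (conj_part mu)"
  have "0 \<notin> set mu" using P by (auto simp: is_partition_def)
  have "part mu ` {..<n} = set mu \<union> (if length mu < n then {0} else {})"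
  proof (intro set_eqI iffI)
    fix v assume "v \<in> set mu \<union> (if length mu < n then {0} else {})"
    then consider k where "k < length mu" "v = mu ! k" | "length mu < n" "v = 0"
      by (auto simp: in_set_conv_nth split: if_splits)
    then show "v \<in> part mu ` {..<n}"
      by cases (use L in \<open>auto simp: part_def image_iff intro!: bexI\<close>)
  qed (use L in \<open>auto simp: part_def\<close>)
  moreover have "?A = (+) n ` part mu ` {..<n}" by auto
  ultimately have "card ?A = card (set mu) + (if length mu < n then 1 else 0)"
    using \<open>0 \<notin> set mu\<close> by (simp add: card_image)
  moreover have "b < a" if "a \<in> ?A" "b \<in> ?B" for a b
  proof -
    obtain i where i: "i < n" "a = n + part mu i" using \<open>a \<in> ?A\<close> by auto
    have "b \<le> length mu" using \<open>b \<in> ?B\<close> parts_gt_le_length by (auto simp: conj_part_altdef)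
    moreover have "0 < part mu i \<or> length mu < n" using i L part_pos_iff[OF P, of i] by auto
    ultimately show ?thesis using i L by auto
  qed
  then have "?A \<inter> ?B = {}" by fastforce
  ultimately show ?thesis
    by (simp add: durfee_join_def card_Un_disjoint card_set_conj_part[OF P])
qed

definition durfee_size :: "nat list \<Rightarrow> nat" where
  "durfee_size la = (LEAST i. part la i \<le> i)"

definition durfee_arm :: "nat list \<Rightarrow> nat list" where
  "durfee_arm la = map (\<lambda>i. la ! i - durfee_size la) [0..<part la (durfee_size la)]"

lemma part_durfee_size_le: "part la (durfee_size la) \<le> durfee_size la"
  unfolding durfee_size_def by (rule LeastI[of _ "length la"]) (simp add: part_def)

lemma less_part_below_durfee_size: "i < durfee_size la \<Longrightarrow> i < part la i"
  unfolding durfee_size_def using not_less_Least not_le by blast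

lemma durfee_size_le_part:
  assumes P: "is_partition la" and i: "i < durfee_size la" shows "durfee_size la \<le> part la i"
proof -
  have "durfee_size la - 1 < part la (durfee_size la - 1)"
    using i less_part_below_durfee_size by simp
  moreover have "part la (durfee_size la - 1) \<le> part la i" using part_antimono[OF P] i by simp
  ultimately show ?thesis using i by linarith
qed

lemma durfee_size_pos: "is_partition la \<Longrightarrow> la \<noteq> [] \<Longrightarrow> 0 < durfee_size la"
  using part_durfee_size_le[of la] part_pos_iff[of la 0] by (cases "durfee_size la") auto

lemma durfee_size_join:
  assumes P: "is_partition mu" and L: "length mu \<le> n" shows "durfee_size (durfee_join n mu) = n"
  unfolding durfee_size_def
proof (rule Least_equality)
  show "part (durfee_join n mu) n \<le> n" using L by (simp add: part_durfee_join[OF P] parts_gt_0[OF P])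
  show "n \<le> y" if "part (durfee_join n mu) y \<le> y" for y
    using that by (cases "y < n") (auto simp: part_durfee_join[OF P])
qed

lemma durfee_arm_join:
  assumes P: "is_partition mu" and L: "length mu \<le> n" shows "durfee_arm (durfee_join n mu) = mu"
proof -
  have "part (durfee_join n mu) n = length mu"
    using L by (simp add: part_durfee_join[OF P] parts_gt_0[OF P])
  moreover have "durfee_join n mu ! i = n + mu ! i" if "i < length mu" for i
    using that L by (simp add: durfee_join_def nth_append part_def)
  ultimately show ?thesis
    unfolding durfee_arm_def durfee_size_join[OF P L] by (intro nth_equalityI) auto
qed

lemma SC_less_part_durfee_size_iff:
  "la \<in> SC \<Longrightarrow> i < part la (durfee_size la) \<longleftrightarrow> durfee_size la < part la i"
  by (metis SC_iff less_parts_gt_iff)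

lemma part_durfee_arm:
  assumes T: "la \<in> SC"
  shows "part (durfee_arm la) i = (if i < durfee_size la then part la i - durfee_size la else 0)"
proof (cases "i < part la (durfee_size la)")
  case True
  then have "durfee_size la < part la i" using SC_less_part_durfee_size_iff[OF T] by simp
  then have "i < length la" by (auto simp: part_def split: if_splits)
  with True part_durfee_size_le[of la] show ?thesis by (simp add: durfee_arm_def part_def)
next
  case False
  then have "part la i \<le> durfee_size la" using SC_less_part_durfee_size_iff[OF T] by simp
  with False show ?thesis by (simp add: durfee_arm_def part_def)
qed

lemma is_partition_durfee_arm:
  assumes T: "la \<in> SC" shows "is_partition (durfee_arm la)"
proof -
  have P: "is_partition la" using T by (simp add: SC_iff)
  have in_arm: "durfee_size la < la ! i \<and> i < length la" if "i < part la (durfee_size la)" for i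
    using that SC_less_part_durfee_size_iff[OF T] by (auto simp: part_def split: if_splits)
  have "la ! j \<le> la ! i" if "i < j" "j < part la (durfee_size la)" for i j
    using nth_antimono[OF P, of i j] that in_arm by simp
  then show ?thesis
    using in_arm unfolding is_partition_def durfee_arm_def
    by (auto simp: sorted_wrt_iff_nth_less intro: diff_le_mono)
qed

lemma length_durfee_arm: "length (durfee_arm la) \<le> durfee_size la"
  using part_durfee_size_le[of la] by (simp add: durfee_arm_def)

lemma durfee_join_arm:
  assumes T: "la \<in> SC" shows "durfee_join (durfee_size la) (durfee_arm la) = la"
proof -
  let ?n = "durfee_size la" and ?mu = "durfee_arm la"
  have P: "is_partition la" and self_conj: "\<And>j. parts_gt la j = part la j"
    using T by (auto simp: SC_iff)
  have M: "is_partition ?mu" by (rule is_partition_durfee_arm[OF T])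
  have "parts_gt ?mu (i - ?n) = parts_gt la i" if "?n \<le> i" for i
  proof -
    have "x < parts_gt ?mu (i - ?n) \<longleftrightarrow> x < parts_gt la i" for x
    proof -
      have "part la x \<le> ?n" if "?n \<le> x"
        using part_antimono[OF P that] part_durfee_size_le[of la] by simp
      then show ?thesis using \<open>?n \<le> i\<close>
        by (auto simp: less_parts_gt_iff[OF M] less_parts_gt_iff[OF P] part_durfee_arm[OF T])
    qed
    then show ?thesis by (metis nat_neq_iff)
  qed
  then show ?thesis
    using durfee_size_le_part[OF P] self_conj
    by (intro partition_eqI[OF is_partition_durfee_join[OF M length_durfee_arm] P])
      (simp add: part_durfee_join[OF M] part_durfee_arm[OF T])
qed

text \<open>\<open>m\<close> is the exponent of \<open>q\<close> in \<open>q\<^bsup>2|\<mu>|\<^esup>\<close>.\<close>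
definition bounded_partitions :: "nat \<Rightarrow> nat \<Rightarrow> nat list set" where
  "bounded_partitions n m = {mu. is_partition mu \<and> length mu \<le> n \<and> 2 * sum_list mu = m}"

lemma sum_SC_by_durfee_size:
  assumes "0 < m"
  shows "(\<Sum>la\<in>{la\<in>SC. psize la = m}. f (n1 la)) =
    (\<Sum>(n, mu)\<in>(SIGMA n:{n\<in>{..<m}. (Suc n)\<^sup>2 \<le> m}. bounded_partitions (Suc n) (m - (Suc n)\<^sup>2)).
       f (2 * card (set mu) + (if length mu < Suc n then 1 else 0)))"
proof (rule sym, rule sum.reindex_bij_witness[where j = "\<lambda>(n, mu). durfee_join (Suc n) mu"
      and i = "\<lambda>la. (durfee_size la - 1, durfee_arm la)"])
  fix a assume "a \<in> (SIGMA n:{n\<in>{..<m}. (Suc n)\<^sup>2 \<le> m}. bounded_partitions (Suc n) (m - (Suc n)\<^sup>2))"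
  then obtain n mu where a: "a = (n, mu)" and P: "is_partition mu" and L: "length mu \<le> Suc n"
    and size: "(Suc n)\<^sup>2 + 2 * sum_list mu = m" by (auto simp: bounded_partitions_def)
  show "(\<lambda>la. (durfee_size la - 1, durfee_arm la)) ((\<lambda>(n, mu). durfee_join (Suc n) mu) a) = a"
    using a durfee_size_join[OF P L] durfee_arm_join[OF P L] by simp
  show "(\<lambda>(n, mu). durfee_join (Suc n) mu) a \<in> {la \<in> SC. psize la = m}"
    using a durfee_join_in_SC[OF P L] psize_durfee_join[OF P L] size by (simp add: psize_def)
  show "f (n1 ((\<lambda>(n, mu). durfee_join (Suc n) mu) a)) =
      (case a of (n, mu) \<Rightarrow> f (2 * card (set mu) + (if length mu < Suc n then 1 else 0)))"
    using a n1_eq_card_set[OF is_partition_durfee_join[OF P L]] card_set_durfee_join[OF P L] by simp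
next
  fix la assume "la \<in> {la \<in> SC. psize la = m}"
  then have T: "la \<in> SC" and size: "psize la = m" by auto
  then have "0 < durfee_size la"
    using assms by (intro durfee_size_pos) (auto simp: SC_iff psize_def)
  then obtain n where n: "durfee_size la = Suc n" using gr0_conv_Suc by blast
  have "psize la = (Suc n)\<^sup>2 + 2 * psize (durfee_arm la)"
    using psize_durfee_join[OF is_partition_durfee_arm[OF T] length_durfee_arm] durfee_join_arm[OF T]
    by (simp add: n)
  moreover have "Suc n \<le> (Suc n)\<^sup>2" by (simp add: power2_eq_square)
  ultimately show "(durfee_size la - 1, durfee_arm la) \<in>
      (SIGMA n:{n\<in>{..<m}. (Suc n)\<^sup>2 \<le> m}. bounded_partitions (Suc n) (m - (Suc n)\<^sup>2))"
    using size n is_partition_durfee_arm[OF T] length_durfee_arm[of la]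
    by (auto simp: bounded_partitions_def psize_def)
  show "(\<lambda>(n, mu). durfee_join (Suc n) mu) (durfee_size la - 1, durfee_arm la) = la"
    using durfee_join_arm[OF T] n by simp
qed

section \<open>Generating functions\<close>

lemma length_le_sum_list: "\<forall>p\<in>set xs. 0 < p \<Longrightarrow> length xs \<le> sum_list (xs :: nat list)"
  by (induction xs) auto

lemma finite_bounded_partitions: "finite (bounded_partitions n m)"
proof (rule finite_subset)
  show "bounded_partitions n m \<subseteq> {xs. set xs \<subseteq> {0..m} \<and> length xs \<le> m}"
  proof
    fix mu assume "mu \<in> bounded_partitions n m"
    then have pos: "\<forall>p\<in>set mu. 0 < p" and size: "2 * sum_list mu = m"
      by (auto simp: bounded_partitions_def is_partition_def)
    have "length mu \<le> sum_list mu" using pos by (rule length_le_sum_list)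
    moreover have "p \<le> sum_list mu" if "p \<in> set mu" for p
      using that by (induction mu) auto
    ultimately show "mu \<in> {xs. set xs \<subseteq> {0..m} \<and> length xs \<le> m}" using size by fastforce
  qed
  show "finite {xs. set xs \<subseteq> {0..m} \<and> length xs \<le> m}"
    by (rule finite_lists_length_le) simp
qed

definition bounded_gf :: "nat \<Rightarrow> int poly fps" where
  "bounded_gf n = Abs_fps (\<lambda>m. \<Sum>mu\<in>bounded_partitions n m. monom 1 (2 * card (set mu)))"

lemma px_power: "px ^ k = monom 1 k"
  by (simp add: monom_altdef)

lemma sum_bounded_partitions_Suc:
  "(\<Sum>mu\<in>bounded_partitions (Suc n) m. monom 1 (2 * card (set mu) + (if length mu < Suc n then k else 0)))
     = fps_nth (bounded_gf (Suc n)) m + (px ^ k - 1) * fps_nth (bounded_gf n) m"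
proof -
  let ?w = "\<lambda>mu. monom (1::int) (2 * card (set mu))"
  have "(\<Sum>mu\<in>bounded_partitions (Suc n) m. monom 1 (2 * card (set mu) + (if length mu < Suc n then k else 0)))
      = (\<Sum>mu\<in>bounded_partitions (Suc n) m. ?w mu + (if length mu < Suc n then (px ^ k - 1) * ?w mu else 0))"
    by (rule sum.cong) (auto simp: px_power mult_monom algebra_simps)
  also have "\<dots> = (\<Sum>mu\<in>bounded_partitions (Suc n) m. ?w mu)
      + (px ^ k - 1) * (\<Sum>mu\<in>{mu\<in>bounded_partitions (Suc n) m. length mu < Suc n}. ?w mu)"
    by (simp add: sum.distrib sum.If_cases finite_bounded_partitions sum_distrib_left Int_def)
  also have "{mu\<in>bounded_partitions (Suc n) m. length mu < Suc n} = bounded_partitions n m"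
    by (auto simp: bounded_partitions_def)
  finally show ?thesis by (simp add: bounded_gf_def)
qed

definition add_column :: "nat \<Rightarrow> nat list \<Rightarrow> nat list" where
  "add_column N nu = map Suc nu @ replicate (N - length nu) 1"

definition remove_column :: "nat list \<Rightarrow> nat list" where
  "remove_column mu = map (\<lambda>p. p - 1) (takeWhile (\<lambda>p. 1 < p) mu)"

lemma add_remove_column:
  "sorted_wrt (\<ge>) xs \<Longrightarrow> \<forall>p\<in>set xs. 0 < p \<Longrightarrow> add_column (length xs) (remove_column xs) = xs"
proof (induction xs)
  case (Cons a xs)
  show ?case
  proof (cases "1 < a")
    case True
    with Cons show ?thesis by (simp add: add_column_def remove_column_def)
  next
    case False
    with Cons.prems have "a = 1" "\<forall>y\<in>set xs. y = 1" by fastforce+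
    then show ?thesis by (simp add: add_column_def remove_column_def replicate_length_same)
  qed
qed (simp add: add_column_def remove_column_def)

lemma remove_add_column: "\<forall>p\<in>set nu. 0 < p \<Longrightarrow> remove_column (add_column N nu) = nu"
proof -
  assume pos: "\<forall>p\<in>set nu. 0 < p"
  have "takeWhile (\<lambda>p. 1 < p) (map Suc nu @ replicate (N - length nu) 1)
      = map Suc nu @ takeWhile (\<lambda>p. 1 < p) (replicate (N - length nu) (1::nat))"
    by (rule takeWhile_append2) (use pos in auto)
  moreover have "takeWhile (\<lambda>p. 1 < p) (replicate k (1::nat)) = []" for k by (cases k) auto
  ultimately show ?thesis by (simp add: remove_column_def add_column_def comp_def)
qed

lemma is_partition_add_column: "is_partition nu \<Longrightarrow> is_partition (add_column N nu)"
proof -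
  assume "is_partition nu"
  moreover have "sorted_wrt (\<ge>) (replicate k (1::nat))" for k by (induction k) auto
  ultimately show ?thesis
    unfolding is_partition_def add_column_def by (auto simp: sorted_wrt_append sorted_wrt_map)
qed

lemma length_add_column: "length nu \<le> N \<Longrightarrow> length (add_column N nu) = N"
  by (simp add: add_column_def)

lemma sum_list_add_column: "length nu \<le> N \<Longrightarrow> sum_list (add_column N nu) = sum_list nu + N"
proof -
  assume "length nu \<le> N"
  moreover have "sum_list (map Suc nu) = sum_list nu + length nu" by (induction nu) auto
  ultimately show ?thesis by (simp add: add_column_def sum_list_replicate)
qed

lemma card_set_add_column:
  assumes "is_partition nu" and "length nu \<le> N"
  shows "card (set (add_column N nu)) = card (set nu) + (if length nu < N then 1 else 0)"
proof -
  have "set (add_column N nu) = Suc ` set nu \<union> (if length nu < N then {1} else {})"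
    using assms(2) by (auto simp: add_column_def)
  moreover have "1 \<notin> Suc ` set nu" using assms(1) by (auto simp: is_partition_def)
  ultimately show ?thesis by (auto simp: card_image)
qed

lemma is_partition_remove_column: "is_partition mu \<Longrightarrow> is_partition (remove_column mu)"
proof -
  assume "is_partition mu"
  then have "sorted_wrt (\<ge>) (takeWhile (\<lambda>p. 1 < p) mu)"
    by (simp add: is_partition_def)
  then have "sorted_wrt (\<lambda>x y. y - 1 \<le> x - 1) (takeWhile (\<lambda>p. 1 < p) mu)"
    by (rule sorted_wrt_mono_rel[rotated]) auto
  then show ?thesis
    unfolding is_partition_def remove_column_def by (auto simp: sorted_wrt_map dest: set_takeWhileD)
qed

lemma length_remove_column_le: "length (remove_column mu) \<le> length mu"
  by (simp add: remove_column_def length_takeWhile_le)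

lemma sum_full_length_bounded_partitions:
  "(\<Sum>mu\<in>{mu\<in>bounded_partitions (Suc n) m. length mu = Suc n}. monom 1 (2 * card (set mu))) =
    (if m < 2 * Suc n then 0 else
       fps_nth (bounded_gf (Suc n)) (m - 2 * Suc n) + (px\<^sup>2 - 1) * fps_nth (bounded_gf n) (m - 2 * Suc n))"
proof (cases "m < 2 * Suc n")
  case True
  have "Suc n \<le> sum_list mu" if "is_partition mu" "length mu = Suc n" for mu
    using that length_le_sum_list[of mu] by (simp add: is_partition_def)
  with True have "{mu\<in>bounded_partitions (Suc n) m. length mu = Suc n} = {}"
    by (fastforce simp: bounded_partitions_def)
  then show ?thesis using True by (simp only:) simp
next
  case False
  define m' where "m' = m - 2 * Suc n"
  txt \<open>Removing the first column lowers the size by \<open>Suc n\<close> and loses one distinct part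
    exactly when the last part is 1.\<close>
  have "(\<Sum>mu\<in>{mu\<in>bounded_partitions (Suc n) m. length mu = Suc n}. monom 1 (2 * card (set mu))) =
      (\<Sum>nu\<in>bounded_partitions (Suc n) m'. monom 1 (2 * card (set nu) + (if length nu < Suc n then 2 else 0)))"
  proof (rule sym, rule sum.reindex_bij_witness[where j = "add_column (Suc n)" and i = remove_column])
    fix nu assume "nu \<in> bounded_partitions (Suc n) m'"
    then have P: "is_partition nu" and L: "length nu \<le> Suc n" and size: "2 * sum_list nu = m'"
      by (auto simp: bounded_partitions_def)
    show "remove_column (add_column (Suc n) nu) = nu"
      using P by (intro remove_add_column) (simp add: is_partition_def)
    show "add_column (Suc n) nu \<in> {mu \<in> bounded_partitions (Suc n) m. length mu = Suc n}"
      using is_partition_add_column[OF P] length_add_column[OF L] sum_list_add_column[OF L] size False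
      by (auto simp: bounded_partitions_def m'_def)
    show "monom 1 (2 * card (set (add_column (Suc n) nu))) =
        monom 1 (2 * card (set nu) + (if length nu < Suc n then 2 else 0))"
      using card_set_add_column[OF P L] by simp
  next
    fix mu assume "mu \<in> {mu \<in> bounded_partitions (Suc n) m. length mu = Suc n}"
    then have P: "is_partition mu" and L: "length mu = Suc n" and size: "2 * sum_list mu = m"
      by (auto simp: bounded_partitions_def)
    have mu: "add_column (Suc n) (remove_column mu) = mu"
      using add_remove_column[of mu] P L by (simp add: is_partition_def)
    then show "add_column (Suc n) (remove_column mu) = mu" .
    have "sum_list mu = sum_list (remove_column mu) + Suc n"
      using sum_list_add_column[of "remove_column mu" "Suc n"] length_remove_column_le[of mu] L mu
      by simp
    then show "remove_column mu \<in> bounded_partitions (Suc n) m'"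
      using is_partition_remove_column[OF P] length_remove_column_le[of mu] L size
      by (auto simp: bounded_partitions_def m'_def)
  qed
  also have "\<dots> = fps_nth (bounded_gf (Suc n)) m' + (px\<^sup>2 - 1) * fps_nth (bounded_gf n) m'"
    by (rule sum_bounded_partitions_Suc)
  finally show ?thesis using False by (simp add: m'_def)
qed

lemma bounded_gf_Suc:
  "bounded_gf (Suc n) =
     bounded_gf n + fps_X ^ (2 * Suc n) * (bounded_gf (Suc n) - fps_const (1 - px\<^sup>2) * bounded_gf n)"
proof (rule fps_ext)
  fix m
  have "bounded_partitions (Suc n) m =
      bounded_partitions n m \<union> {mu\<in>bounded_partitions (Suc n) m. length mu = Suc n}"
    and "bounded_partitions n m \<inter> {mu\<in>bounded_partitions (Suc n) m. length mu = Suc n} = {}"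
    by (auto simp: bounded_partitions_def)
  then have "fps_nth (bounded_gf (Suc n)) m = fps_nth (bounded_gf n) m +
      (\<Sum>mu\<in>{mu\<in>bounded_partitions (Suc n) m. length mu = Suc n}. monom 1 (2 * card (set mu)))"
    unfolding bounded_gf_def fps_nth_Abs_fps
    by (metis (no_types, lifting) finite_bounded_partitions finite_Un sum.union_disjoint)
  also have "\<dots> = fps_nth (bounded_gf n) m + (if m < 2 * Suc n then 0 else
       fps_nth (bounded_gf (Suc n)) (m - 2 * Suc n) + (px\<^sup>2 - 1) * fps_nth (bounded_gf n) (m - 2 * Suc n))"
    by (simp only: sum_full_length_bounded_partitions)
  also have "\<dots> = fps_nth (bounded_gf n +
      fps_X ^ (2 * Suc n) * (bounded_gf (Suc n) - fps_const (1 - px\<^sup>2) * bounded_gf n)) m"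
    unfolding fps_add_nth fps_X_power_mult_nth fps_sub_nth fps_mult_left_const_nth
    by (simp add: algebra_simps)
  finally show "fps_nth (bounded_gf (Suc n)) m = fps_nth (bounded_gf n +
      fps_X ^ (2 * Suc n) * (bounded_gf (Suc n) - fps_const (1 - px\<^sup>2) * bounded_gf n)) m" .
qed

lemma bounded_gf_0: "bounded_gf 0 = 1"
proof (rule fps_ext)
  fix m
  have "bounded_partitions 0 m = (if m = 0 then {[]} else {})"
    by (auto simp: bounded_partitions_def is_partition_def)
  then show "fps_nth (bounded_gf 0) m = fps_nth 1 m" by (simp add: bounded_gf_def)
qed

lemma qpoch_Suc: "qpoch a b (Suc n) = qpoch a b n * (1 - a * b ^ n)"
  by (simp add: qpoch_def)

lemma fps_X_square_mult_power: "(fps_X\<^sup>2 :: 'a::comm_ring_1 fps) * (fps_X\<^sup>2) ^ n = fps_X ^ (2 * Suc n)"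
  by (simp add: power_mult[symmetric] power_add[symmetric])

lemma qpoch_mult_bounded_gf:
  "qpoch (fps_X\<^sup>2) (fps_X\<^sup>2) n * bounded_gf n = qpoch (fps_const (1 - px\<^sup>2) * fps_X\<^sup>2) (fps_X\<^sup>2) n"
proof (induction n)
  case 0
  then show ?case by (simp add: qpoch_def bounded_gf_0)
next
  case (Suc n)
  let ?Y = "fps_X ^ (2 * Suc n) :: int poly fps" and ?c = "fps_const (1 - px\<^sup>2)"
  have "(1 - ?Y) * bounded_gf (Suc n) - (1 - ?c * ?Y) * bounded_gf n =
      bounded_gf (Suc n) - (bounded_gf n + ?Y * (bounded_gf (Suc n) - ?c * bounded_gf n))"
    by (simp add: algebra_simps)
  then have rec: "(1 - ?Y) * bounded_gf (Suc n) = (1 - ?c * ?Y) * bounded_gf n"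
    using bounded_gf_Suc[of n] by simp
  have "qpoch (fps_X\<^sup>2) (fps_X\<^sup>2) (Suc n) * bounded_gf (Suc n) =
      qpoch (fps_X\<^sup>2) (fps_X\<^sup>2) n * ((1 - ?Y) * bounded_gf (Suc n))"
    by (simp only: qpoch_Suc fps_X_square_mult_power mult.assoc)
  also have "\<dots> = qpoch (fps_X\<^sup>2) (fps_X\<^sup>2) n * ((1 - ?c * ?Y) * bounded_gf n)"
    by (simp only: rec)
  also have "\<dots> = (qpoch (fps_X\<^sup>2) (fps_X\<^sup>2) n * bounded_gf n) * (1 - ?c * ?Y)"
    by (simp only: mult_ac)
  also have "\<dots> = qpoch (?c * fps_X\<^sup>2) (fps_X\<^sup>2) (Suc n)"
    by (simp only: Suc qpoch_Suc mult.assoc fps_X_square_mult_power)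
  finally show ?case .
qed

definition durfee_gf :: "nat \<Rightarrow> int poly fps" where
  "durfee_gf n = bounded_gf (Suc n) + fps_const (px - 1) * bounded_gf n"

lemma fps_nth_durfee_gf:
  "fps_nth (durfee_gf n) m =
     (\<Sum>mu\<in>bounded_partitions (Suc n) m. monom 1 (2 * card (set mu) + (if length mu < Suc n then 1 else 0)))"
  by (simp add: sum_bounded_partitions_Suc durfee_gf_def)

lemma fps_nth_SC_gf:
  assumes "0 < m"
  shows "fps_nth SC_gf m = (\<Sum>n<m. fps_nth (fps_X ^ (Suc n)\<^sup>2 * durfee_gf n) m)"
proof -
  let ?I = "{n\<in>{..<m}. (Suc n)\<^sup>2 \<le> m}"
  have "fps_nth SC_gf m =
      (\<Sum>(n, mu)\<in>(SIGMA n:?I. bounded_partitions (Suc n) (m - (Suc n)\<^sup>2)).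
         monom 1 (2 * card (set mu) + (if length mu < Suc n then 1 else 0)))"
    unfolding SC_gf_def fps_nth_Abs_fps by (rule sum_SC_by_durfee_size[OF assms])
  also have "\<dots> = (\<Sum>n\<in>?I. fps_nth (durfee_gf n) (m - (Suc n)\<^sup>2))"
    by (subst sum.Sigma[symmetric]) (auto simp: finite_bounded_partitions fps_nth_durfee_gf)
  also have "\<dots> = (\<Sum>n<m. if (Suc n)\<^sup>2 \<le> m then fps_nth (durfee_gf n) (m - (Suc n)\<^sup>2) else 0)"
    by (rule sum.inter_filter) simp
  also have "\<dots> = (\<Sum>n<m. fps_nth (fps_X ^ (Suc n)\<^sup>2 * durfee_gf n) m)"
    by (rule sum.cong) (auto simp: fps_X_power_mult_nth)
  finally show ?thesis .
qed

lemma fps_nth_SC_gf_0: "fps_nth SC_gf 0 = 1"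
proof -
  have "[] \<in> SC" by (simp add: SC_iff is_partition_def parts_gt_def)
  moreover have "la = []" if "la \<in> SC" "psize la = 0" for la
    using that by (cases la) (auto simp: SC_iff is_partition_def psize_def)
  ultimately have "{la\<in>SC. psize la = 0} = {[]}" by (auto simp: psize_def)
  then show ?thesis by (simp add: SC_gf_def n1_def cells_def)
qed

lemma fps_nth_qpoch_0: "fps_nth a 0 = 0 \<Longrightarrow> fps_nth (qpoch a b n) 0 = 1"
  by (induction n) (simp_all add: qpoch_def)

lemma fps_div1_eqI:
  fixes H :: "'a::comm_ring_1 fps"
  assumes "fps_nth D 0 = 1" and "D * H = c * N"
  shows "c * fps_div1 N D = H"
proof -
  have inv: "fps_left_inverse D 1 * D = 1" by (rule fps_left_inverse) (simp add: assms(1))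
  have "c * fps_div1 N D = fps_left_inverse D 1 * (c * N)" by (simp add: fps_div1_def mult_ac)
  also have "\<dots> = (fps_left_inverse D 1 * D) * H" by (simp add: assms(2) mult.assoc)
  finally show ?thesis by (simp add: inv)
qed

lemma px_mult_rhs_term: "fps_const px * rhs_term (Suc n) = fps_X ^ (Suc n)\<^sup>2 * durfee_gf n"
proof -
  let ?Y = "fps_X ^ (2 * Suc n) :: int poly fps" and ?x = "fps_const px :: int poly fps"
  let ?D = "\<lambda>n. qpoch (fps_X\<^sup>2 :: int poly fps) (fps_X\<^sup>2) n"
    and ?P = "\<lambda>n. qpoch (fps_const (1 - px\<^sup>2) * fps_X\<^sup>2 :: int poly fps) (fps_X\<^sup>2) n"
  have const_eqs: "fps_const (1 - px\<^sup>2) = 1 - ?x ^ 2" "fps_const (px - 1) = ?x - 1" "fps_const (1 - px) = 1 - ?x"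
    by (metis fps_const_1_eq_1 fps_const_sub fps_const_power)+
  have step: "?D (Suc n) * bounded_gf (Suc n) = ?P n * (1 - (1 - ?x ^ 2) * ?Y)"
    using qpoch_mult_bounded_gf[of "Suc n"] const_eqs
    by (simp only: qpoch_Suc fps_X_square_mult_power mult.assoc)
  have prev: "?D (Suc n) * bounded_gf n = (1 - ?Y) * ?P n"
    using qpoch_mult_bounded_gf[of n] by (simp add: qpoch_Suc fps_X_square_mult_power mult_ac)
  have "?D (Suc n) * (fps_X ^ (Suc n)\<^sup>2 * durfee_gf n) = fps_X ^ (Suc n)\<^sup>2 *
      (?D (Suc n) * bounded_gf (Suc n) + (?x - 1) * (?D (Suc n) * bounded_gf n))"
    by (simp add: durfee_gf_def const_eqs algebra_simps)
  also have "\<dots> = fps_X ^ (Suc n)\<^sup>2 * (?P n * (1 - (1 - ?x ^ 2) * ?Y) + (?x - 1) * ((1 - ?Y) * ?P n))"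
    by (simp only: step prev)
  also have "\<dots> = ?x * (fps_X ^ (Suc n)\<^sup>2 * (1 - fps_const (1 - px) * ?Y) * ?P n)"
    by (simp add: const_eqs algebra_simps power2_eq_square)
  finally show ?thesis
    unfolding rhs_term_def by (intro fps_div1_eqI fps_nth_qpoch_0) simp_all
qed

lemma sums_fps_nth_vanishing:
  fixes f :: "nat \<Rightarrow> 'a::comm_ring_1 fps"
  assumes "\<And>n k. k \<le> n \<Longrightarrow> fps_nth (f n) k = 0"
  shows "f sums Abs_fps (\<lambda>k. \<Sum>n<k. fps_nth (f n) k)"
  unfolding sums_def
proof (rule tendsto_fpsI)
  fix k
  have "fps_nth (\<Sum>n<N. f n) k = (\<Sum>n<k. fps_nth (f n) k)" if "k \<le> N" for N
    unfolding fps_sum_nth using that assms by (intro sum.mono_neutral_right) auto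
  then show "\<forall>\<^sub>F N in sequentially. fps_nth (\<Sum>n<N. f n) k = fps_nth (Abs_fps (\<lambda>k. \<Sum>n<k. fps_nth (f n) k)) k"
    by (auto intro: eventually_sequentiallyI)
qed

theorem mainTheorem8:
  shows "summable (\<lambda>n. rhs_term (Suc n)) \<and>
         SC_gf = 1 + fps_const px * (\<Sum>n. rhs_term (Suc n))"
proof -
  have "fps_nth (rhs_term (Suc n)) k = 0" if "k \<le> n" for n k
  proof -
    have "k < (Suc n)\<^sup>2" using that by (simp add: power2_eq_square)
    then show ?thesis by (simp add: rhs_term_def fps_div1_def mult.assoc fps_X_power_mult_nth)
  qed
  then have sums: "(\<lambda>n. rhs_term (Suc n)) sums Abs_fps (\<lambda>k. \<Sum>n<k. fps_nth (rhs_term (Suc n)) k)"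
    by (rule sums_fps_nth_vanishing)
  have "fps_nth SC_gf k = fps_nth (1 + fps_const px * Abs_fps (\<lambda>k. \<Sum>n<k. fps_nth (rhs_term (Suc n)) k)) k" for k
    by (cases "k = 0")
      (simp_all add: fps_nth_SC_gf_0 fps_nth_SC_gf sum_distrib_left px_mult_rhs_term[symmetric])
  then show ?thesis
    using sums by (simp add: fps_ext sums_summable sums_unique[symmetric])
qed

end
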